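(* Let $G=(V,D,B)$ be a mixed graph, $v\in V$, and $A\subseteq V\setminus(\{v\}\cup\mathrm{sib}(v))$. There exists a set $Y\subseteq A$ satisfying the half-trek criterion with respect to $v$ if and only if the maximum flow in the network $G_{\mathrm{flow}}(v,A)$ has size $|\mathrm{pa}(v)|$.
   Context: A mixed graph is $G=(V,D,B)$ with $V=[m]$, $D$ directed edges $v\to w$, $B$ symmetric bidirected edges $v\leftrightarrow w$, no self-loops. $\mathrm{pa}(v)=\{w:w\to v\in D\}$, $\mathrm{sib}(v)=\{w:w\leftrightarrow v\in B\}$. A half-trek from $y$ to $w$ is a path $y\leftrightarrow w_0\to w_1\to\cdots\to w_r=w$ (left side $\{y\}$, right side $\{w_0,\dots,w_r\}$) or $y\to w_1\to\cdots\to w_r=w$, $r\ge0$ (left side $\{y\}$, right side $\{y,w_1,\dots,w_r\}$); nodes may repeat. A system of half-treks from $X$ to $Y$: half-treks with distinct sources forming $X$ and distinct targets forming $Y$; no sided intersection: pairwise disjoint left sides and pairwise disjoint right sides. $Y$ satisfies the half-trek criterion w.r.t. $v$ if $|Y|=|\mathrm{pa}(v)|$, $Y\cap(\{v\}\cup\mathrm{sib}(v))=\emptyset$, and there is a system of half-treks with no sided intersection from $Y$ to $\mathrm{pa}(v)$. Flows: given a directed graph with source $s$, sink $t$, node capacities $c_V\ge0$ and edge capacities $c_D\ge0$, a flow is $f:\text{edges}\to\mathbb{R}_{\ge0}$ with $f(e)\le c_D(e)$ for all edges and, for every node $x\ne s,t$, $\sum_u f(u,x)=\sum_w f(x,w)\le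 c_V(x)$; its size is $|f|=\sum_w f(s,w)$. The network $G_{\mathrm{flow}}(v,A)$ has nodes $s,t$, a node $L(a)$ for each $a\in A$, and a node $R(w)$ for each $w\in V$; its edges are $s\to L(a)$ and $L(a)\to R(a)$ for each $a\in A$, $L(a)\to R(w)$ for each $a\in A$ and $w$ with $a\leftrightarrow w\in B$, $R(w)\to R(u)$ for each $w\to u\in D$, and $R(w)\to t$ for each $w\in\mathrm{pa}(v)$. All edges and the nodes $s,t$ have capacity $\infty$; all other nodes have capacity $1$. *)

theory Defs
  imports Complex_Main "HOL-Library.Extended_Real"
begin

text \<open>Vertex set V = [m] = {1..m}; D directed edges (v,w) meaning v -> w;
  B bidirected edges, stored as a symmetric relation.\<close>

definition verts :: "nat \<Rightarrow> nat set" where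
  "verts m = {1..m}"

definition mixed_graph :: "nat \<Rightarrow> (nat \<times> nat) set \<Rightarrow> (nat \<times> nat) set \<Rightarrow> bool" where
  "mixed_graph m D B \<longleftrightarrow>
     D \<subseteq> verts m \<times> verts m \<and> B \<subseteq> verts m \<times> verts m \<and> sym B \<and>
     (\<forall>x. (x, x) \<notin> D \<and> (x, x) \<notin> B)"

definition pa :: "(nat \<times> nat) set \<Rightarrow> nat \<Rightarrow> nat set" where
  "pa D v = {w. (w, v) \<in> D}"

definition sib :: "(nat \<times> nat) set \<Rightarrow> nat \<Rightarrow> nat set" where
  "sib B v = {w. (w, v) \<in> B}"

text \<open>A half-trek with source y is encoded as a pair (bid, ws):
  if bid, it is y <-> w0 -> w1 -> ... -> wr with ws = [w0,...,wr];
  if not bid, it is y -> w1 -> ... -> wr with ws = [y,w1,...,wr] (r >= 0).\<close>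

definition half_trek ::
  "(nat \<times> nat) set \<Rightarrow> (nat \<times> nat) set \<Rightarrow> nat \<Rightarrow> nat \<Rightarrow> bool \<times> nat list \<Rightarrow> bool" where
  "half_trek D B y w p \<longleftrightarrow>
     (let bid = fst p; ws = snd p in
       ws \<noteq> [] \<and> last ws = w \<and> successively (\<lambda>a b. (a, b) \<in> D) ws \<and>
       (if bid then (y, hd ws) \<in> B else hd ws = y))"

definition left_side :: "nat \<Rightarrow> bool \<times> nat list \<Rightarrow> nat set" where
  "left_side y p = {y}"

definition right_side :: "bool \<times> nat list \<Rightarrow> nat set" where
  "right_side p = set (snd p)"

definition htsystem_no_sided_int ::
  "(nat \<times> nat) set \<Rightarrow> (nat \<times> nat) set \<Rightarrow> nat set \<Rightarrow> nat set \<Rightarrow> bool" where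
  "htsystem_no_sided_int D B X Y \<longleftrightarrow>
     (\<exists>\<sigma> P. bij_betw \<sigma> X Y \<and> (\<forall>x\<in>X. half_trek D B x (\<sigma> x) (P x)) \<and>
        (\<forall>x\<in>X. \<forall>x'\<in>X. x \<noteq> x' \<longrightarrow>
            left_side x (P x) \<inter> left_side x' (P x') = {} \<and>
            right_side (P x) \<inter> right_side (P x') = {}))"

definition HTC :: "(nat \<times> nat) set \<Rightarrow> (nat \<times> nat) set \<Rightarrow> nat \<Rightarrow> nat set \<Rightarrow> bool" where
  "HTC D B v Y \<longleftrightarrow>
     finite Y \<and> card Y = card (pa D v) \<and> Y \<inter> ({v} \<union> sib B v) = {} \<and>
     htsystem_no_sided_int D B Y (pa D v)"

text \<open>A flow assigns a value f e to each edge e \<in> E (values off E are irrelevant).\<close>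

definition inflow :: "'n set \<Rightarrow> ('n \<times> 'n) set \<Rightarrow> ('n \<times> 'n \<Rightarrow> real) \<Rightarrow> 'n \<Rightarrow> real" where
  "inflow N E f x = (\<Sum>u\<in>{u\<in>N. (u, x) \<in> E}. f (u, x))"

definition outflow :: "'n set \<Rightarrow> ('n \<times> 'n) set \<Rightarrow> ('n \<times> 'n \<Rightarrow> real) \<Rightarrow> 'n \<Rightarrow> real" where
  "outflow N E f x = (\<Sum>w\<in>{w\<in>N. (x, w) \<in> E}. f (x, w))"

definition is_flow ::
  "'n set \<Rightarrow> ('n \<times> 'n) set \<Rightarrow> 'n \<Rightarrow> 'n \<Rightarrow> ('n \<Rightarrow> ereal) \<Rightarrow> ('n \<times> 'n \<Rightarrow> ereal)
     \<Rightarrow> ('n \<times> 'n \<Rightarrow> real) \<Rightarrow> bool" where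
  "is_flow N E s t cV cD f \<longleftrightarrow>
     (\<forall>e\<in>E. 0 \<le> f e \<and> ereal (f e) \<le> cD e) \<and>
     (\<forall>x\<in>N - {s, t}. inflow N E f x = outflow N E f x \<and> ereal (inflow N E f x) \<le> cV x)"

definition flow_size :: "'n set \<Rightarrow> ('n \<times> 'n) set \<Rightarrow> 'n \<Rightarrow> ('n \<times> 'n \<Rightarrow> real) \<Rightarrow> real" where
  "flow_size N E s f = outflow N E f s"

definition max_flow_size ::
  "'n set \<Rightarrow> ('n \<times> 'n) set \<Rightarrow> 'n \<Rightarrow> 'n \<Rightarrow> ('n \<Rightarrow> ereal) \<Rightarrow> ('n \<times> 'n \<Rightarrow> ereal) \<Rightarrow> real \<Rightarrow> bool" where
  "max_flow_size N E s t cV cD k \<longleftrightarrow>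
     (\<exists>f. is_flow N E s t cV cD f \<and> flow_size N E s f = k) \<and>
     (\<forall>f. is_flow N E s t cV cD f \<longrightarrow> flow_size N E s f \<le> k)"

datatype fnode = Src | Snk | L nat | R nat

definition gflow_nodes :: "nat \<Rightarrow> nat set \<Rightarrow> fnode set" where
  "gflow_nodes m A = {Src, Snk} \<union> L ` A \<union> R ` verts m"

definition gflow_edges ::
  "nat \<Rightarrow> (nat \<times> nat) set \<Rightarrow> (nat \<times> nat) set \<Rightarrow> nat \<Rightarrow> nat set \<Rightarrow> (fnode \<times> fnode) set" where
  "gflow_edges m D B v A =
     {(Src, L a) | a. a \<in> A} \<union>
     {(L a, R a) | a. a \<in> A} \<union>
     {(L a, R w) | a w. a \<in> A \<and> w \<in> verts m \<and> (a, w) \<in> B} \<union>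
     {(R w, R u) | w u. w \<in> verts m \<and> u \<in> verts m \<and> (w, u) \<in> D} \<union>
     {(R w, Snk) | w. w \<in> verts m \<and> w \<in> pa D v}"

definition gflow_cV :: "fnode \<Rightarrow> ereal" where
  "gflow_cV x = (if x = Src \<or> x = Snk then \<infinity> else 1)"

definition gflow_cD :: "fnode \<times> fnode \<Rightarrow> ereal" where
  "gflow_cD e = \<infinity>"

end

theory Submission
  imports Defs
begin

text \<open>
  Removing source and sink, G_flow(v, A) is a digraph H on left copies L a
  (a \<in> A) and right copies R w. A half-trek system with no sided intersection from
  Y \<subseteq> A to pa(v) is the same thing as a family of |pa(v)| vertex-disjoint paths in H
  from L ` A to R ` pa(v): the half-trek from y along w_0, ..., w_r corresponds to the
  path L y, R w_0, ..., R w_r. Since all inner nodes have capacity one, a flow of size k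
  exists iff there are k disjoint such paths; one direction sends a unit along every
  path, the other is Menger's theorem combined with the bound of a flow by any
  separator.
\<close>

section \<open>Walks, linkings and separators in a digraph\<close>

definition walk :: "('a \<times> 'a) set \<Rightarrow> 'a list \<Rightarrow> bool" where
  "walk E p \<longleftrightarrow> p \<noteq> [] \<and> successively (\<lambda>a b. (a, b) \<in> E) p"

definition stpath :: "('a \<times> 'a) set \<Rightarrow> 'a set \<Rightarrow> 'a set \<Rightarrow> 'a list \<Rightarrow> bool" where
  "stpath E S T p \<longleftrightarrow> walk E p \<and> hd p \<in> S \<and> last p \<in> T"

definition separates :: "('a \<times> 'a) set \<Rightarrow> 'a set \<Rightarrow> 'a set \<Rightarrow> 'a set \<Rightarrow> bool" where
  "separates E S T X \<longleftrightarrow> (\<forall>p. stpath E S T p \<longrightarrow> set p \<inter> X \<noteq> {})"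

definition linking :: "('a \<times> 'a) set \<Rightarrow> 'a set \<Rightarrow> 'a set \<Rightarrow> 'a list set \<Rightarrow> bool" where
  "linking E S T Ps \<longleftrightarrow> (\<forall>p\<in>Ps. stpath E S T p) \<and>
     (\<forall>p\<in>Ps. \<forall>q\<in>Ps. p \<noteq> q \<longrightarrow> set p \<inter> set q = {})"

lemma in_set_tlD: "x \<in> set (tl xs) \<Longrightarrow> x \<in> set xs"
  by (cases xs) auto

lemma walk_nonempty: "walk E p \<Longrightarrow> p \<noteq> []"
  by (simp add: walk_def)

lemma walk_single [simp]: "walk E [a]"
  by (simp add: walk_def)

lemma walk_Cons: "walk E (a # p) \<longleftrightarrow> p = [] \<or> ((a, hd p) \<in> E \<and> walk E p)"
  by (auto simp: walk_def successively_Cons)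

lemma walk_mono: "walk E p \<Longrightarrow> E \<subseteq> E' \<Longrightarrow> walk E' p"
  unfolding walk_def by (auto elim: successively_mono)

lemma walk_append: "walk E p \<Longrightarrow> walk E q \<Longrightarrow> (last p, hd q) \<in> E \<Longrightarrow> walk E (p @ q)"
  by (auto simp: walk_def successively_append_iff)

lemma walk_glue: "walk E (p1 @ [w]) \<Longrightarrow> walk E (w # q2) \<Longrightarrow> walk E (p1 @ w # q2)"
  by (auto simp: walk_def successively_append_iff)

lemma walk_append_tl:
  assumes "walk E p" "walk E q" "last p = hd q"
  shows "walk E (p @ tl q)"
proof -
  obtain p1 where p: "p = p1 @ [last p]" using walk_nonempty[OF assms(1)] by (metis append_butlast_last_id)
  obtain q2 where q: "q = hd q # q2" using walk_nonempty[OF assms(2)] by (cases q) auto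
  have "walk E (p1 @ last p # q2)" using assms p q by (metis walk_glue)
  then show ?thesis using p q by (metis append.assoc append_Cons append_Nil list.sel(3))
qed

lemma last_append_tl: "p \<noteq> [] \<Longrightarrow> q \<noteq> [] \<Longrightarrow> last p = hd q \<Longrightarrow> last (p @ tl q) = last q"
  by (cases q rule: rev_cases) (auto simp: tl_append split: list.splits)

lemma walk_split: "walk E (p1 @ w # p2) \<Longrightarrow> walk E (p1 @ [w]) \<and> walk E (w # p2)"
  by (auto simp: walk_def successively_append_iff)

lemma stpath_append:
  assumes "walk E p" "hd p \<in> S" "walk E q" "last q \<in> T" "(last p, hd q) \<in> E"
  shows "stpath E S T (p @ q)"
  using assms walk_append[OF assms(1,3,5)] walk_nonempty[OF assms(1)] walk_nonempty[OF assms(3)]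
  by (simp add: stpath_def)

lemma stpath_append_tl:
  assumes "walk E p" "hd p \<in> S" "walk E q" "last q \<in> T" "last p = hd q"
  shows "stpath E S T (p @ tl q)"
  using assms walk_append_tl[OF assms(1,3,5)] last_append_tl[OF _ _ assms(5)]
    walk_nonempty[OF assms(1)] walk_nonempty[OF assms(3)]
  by (simp add: stpath_def)

lemma walk_vertices:
  "walk E p \<Longrightarrow> E \<subseteq> V \<times> V \<Longrightarrow> hd p \<in> V \<Longrightarrow> set p \<subseteq> V"
  by (induction p) (auto simp: walk_Cons)

lemma walk_insert_edge:
  "walk (insert (x, y) F) p \<Longrightarrow> \<not> walk F p \<Longrightarrow> x \<in> set (butlast p) \<and> y \<in> set (tl p)"
proof (induction p)
  case Nil then show ?case by (simp add: walk_def)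
next
  case (Cons a p)
  then have "p \<noteq> []" by auto
  show ?case
  proof (cases "walk F p")
    case True
    then have "(a, hd p) = (x, y)" using Cons.prems \<open>p \<noteq> []\<close> by (auto simp: walk_Cons)
    then show ?thesis using \<open>p \<noteq> []\<close> by auto
  next
    case False
    then have "x \<in> set (butlast p) \<and> y \<in> set (tl p)"
      using Cons.IH Cons.prems \<open>p \<noteq> []\<close> by (auto simp: walk_Cons)
    then show ?thesis using \<open>p \<noteq> []\<close> by (auto dest: in_set_tlD)
  qed
qed

lemma walk_first_hit:
  "walk E p \<Longrightarrow> set p \<inter> Z \<noteq> {} \<Longrightarrow>
   \<exists>q. walk E q \<and> hd q = hd p \<and> last q \<in> Z \<and> set (butlast q) \<inter> Z = {} \<and> set q \<subseteq> set p"
proof (induction p)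
  case Nil then show ?case by simp
next
  case (Cons a p)
  show ?case
  proof (cases "a \<in> Z")
    case True then show ?thesis by (intro exI[of _ "[a]"]) auto
  next
    case False
    then have "p \<noteq> []" "set p \<inter> Z \<noteq> {}" "walk E p" "(a, hd p) \<in> E"
      using Cons.prems by (auto simp: walk_Cons)
    then obtain q where q: "walk E q" "hd q = hd p" "last q \<in> Z"
      "set (butlast q) \<inter> Z = {}" "set q \<subseteq> set p" using Cons.IH by blast
    then show ?thesis using False \<open>(a, hd p) \<in> E\<close> walk_nonempty[OF q(1)]
      by (intro exI[of _ "a # q"]) (auto simp: walk_Cons)
  qed
qed

lemma walk_last_hit:
  "walk E p \<Longrightarrow> set p \<inter> Z \<noteq> {} \<Longrightarrow>
   \<exists>q. walk E q \<and> last q = last p \<and> hd q \<in> Z \<and> set (tl q) \<inter> Z = {} \<and> set q \<subseteq> set p"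
proof (induction p)
  case Nil then show ?case by simp
next
  case (Cons a p)
  show ?case
  proof (cases "p \<noteq> [] \<and> set p \<inter> Z \<noteq> {}")
    case True
    then obtain q where "walk E q" "last q = last p" "hd q \<in> Z"
      "set (tl q) \<inter> Z = {}" "set q \<subseteq> set p" using Cons by (auto simp: walk_Cons)
    then show ?thesis using True by (intro exI[of _ q]) auto
  next
    case False
    then show ?thesis using Cons.prems by (intro exI[of _ "a # p"]) auto
  qed
qed

lemma walk_to_path:
  "walk E p \<Longrightarrow> \<exists>q. walk E q \<and> distinct q \<and> hd q = hd p \<and> last q = last p \<and> set q \<subseteq> set p"
proof (induction "length p" arbitrary: p rule: less_induct)
  case less
  show ?case
  proof (cases "distinct p")
    case True then show ?thesis using less.prems by blast
  next
    case False
    then obtain xs y ys zs where p: "p = xs @ [y] @ ys @ [y] @ zs"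
      using not_distinct_decomp by blast
    let ?p = "xs @ [y] @ zs"
    have "walk E (xs @ [y])" "walk E (y # zs)"
      using walk_split[of E xs y "ys @ y # zs"] walk_split[of E "xs @ y # ys" y zs] less.prems p
      by auto
    then have "walk E ?p" by (simp add: walk_glue)
    moreover have "length ?p < length p" using p by simp
    ultimately obtain q where "walk E q" "distinct q" "hd q = hd ?p" "last q = last ?p" "set q \<subseteq> set ?p"
      using less.hyps by blast
    moreover have "hd ?p = hd p" "last ?p = last p" "set ?p \<subseteq> set p"
      using p by (cases xs; cases zs; auto)+
    ultimately show ?thesis by auto
  qed
qed

lemma linking_of_family:
  assumes "\<forall>z\<in>I. stpath E S T (h z)"
    and "\<forall>z\<in>I. \<forall>z'\<in>I. z \<noteq> z' \<longrightarrow> set (h z) \<inter> set (h z') = {}"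
  shows "linking E S T (h ` I)" "card (h ` I) = card I"
proof -
  have "inj_on h I"
  proof (rule inj_onI)
    fix a b assume "a \<in> I" "b \<in> I" "h a = h b"
    then show "a = b" using assms walk_nonempty by (fastforce simp: stpath_def)
  qed
  then show "card (h ` I) = card I" by (rule card_image)
  show "linking E S T (h ` I)" using assms by (fastforce simp: linking_def)
qed

lemma linking_path:
  "linking E S T Ps \<Longrightarrow> p \<in> Ps \<Longrightarrow> walk E p \<and> hd p \<in> S \<and> last p \<in> T"
  by (simp add: linking_def stpath_def)

lemma linking_disjoint:
  "linking E S T Ps \<Longrightarrow> p \<in> Ps \<Longrightarrow> q \<in> Ps \<Longrightarrow> p \<noteq> q \<Longrightarrow> set p \<inter> set q = {}"
  by (simp add: linking_def)

lemma linking_mono: "linking F S T Ps \<Longrightarrow> F \<subseteq> G \<Longrightarrow> linking G S T Ps"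
  by (auto simp: linking_def stpath_def intro: walk_mono)

lemma linking_shrink:
  assumes "linking E S T Ps"
    and "\<forall>p\<in>Ps. set (g p) \<subseteq> set p \<and> stpath E S' T' (g p)"
  shows "linking E S' T' (g ` Ps)" "card (g ` Ps) = card Ps"
proof -
  have "\<forall>p\<in>Ps. \<forall>q\<in>Ps. p \<noteq> q \<longrightarrow> set (g p) \<inter> set (g q) = {}"
    using assms unfolding linking_def by blast
  then show "linking E S' T' (g ` Ps)" "card (g ` Ps) = card Ps"
    using linking_of_family[of Ps E S' T' g] assms(2) by auto
qed

lemma linking_trim_front:
  assumes "linking E S Z Ps"
  shows "\<exists>Ps'. linking E S Z Ps' \<and> card Ps' = card Ps \<and> (\<forall>p\<in>Ps'. set (butlast p) \<inter> Z = {})"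
proof -
  have "\<exists>q. walk E q \<and> hd q = hd p \<and> last q \<in> Z \<and> set (butlast q) \<inter> Z = {} \<and> set q \<subseteq> set p"
    if "p \<in> Ps" for p
  proof -
    have "walk E p" "last p \<in> Z" using assms that by (auto simp: linking_def stpath_def)
    then show ?thesis using walk_first_hit[of E p Z] walk_nonempty last_in_set by blast
  qed
  then obtain g where g: "\<forall>p\<in>Ps. walk E (g p) \<and> hd (g p) = hd p \<and> last (g p) \<in> Z \<and>
      set (butlast (g p)) \<inter> Z = {} \<and> set (g p) \<subseteq> set p" by metis
  then have "\<forall>p\<in>Ps. set (g p) \<subseteq> set p \<and> stpath E S Z (g p)"
    using assms by (simp add: linking_def stpath_def)
  with linking_shrink[OF assms] g show ?thesis by (intro exI[of _ "g ` Ps"]) auto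
qed

lemma linking_trim_back:
  assumes "linking E Z T Ps"
  shows "\<exists>Ps'. linking E Z T Ps' \<and> card Ps' = card Ps \<and> (\<forall>p\<in>Ps'. set (tl p) \<inter> Z = {})"
proof -
  have "\<exists>q. walk E q \<and> last q = last p \<and> hd q \<in> Z \<and> set (tl q) \<inter> Z = {} \<and> set q \<subseteq> set p"
    if "p \<in> Ps" for p
  proof -
    have "walk E p" "hd p \<in> Z" using assms that by (auto simp: linking_def stpath_def)
    then show ?thesis using walk_last_hit[of E p Z] walk_nonempty hd_in_set by blast
  qed
  then obtain g where g: "\<forall>p\<in>Ps. walk E (g p) \<and> last (g p) = last p \<and> hd (g p) \<in> Z \<and>
      set (tl (g p)) \<inter> Z = {} \<and> set (g p) \<subseteq> set p" by metis
  then have "\<forall>p\<in>Ps. set (g p) \<subseteq> set p \<and> stpath E Z T (g p)"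
    using assms by (simp add: linking_def stpath_def)
  with linking_shrink[OF assms] g show ?thesis by (intro exI[of _ "g ` Ps"]) auto
qed

lemma linking_distinct:
  assumes "linking E S T Ps"
  shows "\<exists>Ps'. linking E S T Ps' \<and> card Ps' = card Ps \<and> (\<forall>p\<in>Ps'. distinct p)"
proof -
  obtain g where g: "\<forall>p\<in>Ps. walk E (g p) \<and> distinct (g p) \<and> hd (g p) = hd p \<and>
      last (g p) = last p \<and> set (g p) \<subseteq> set p"
    using walk_to_path assms unfolding linking_def stpath_def by metis
  then have "\<forall>p\<in>Ps. set (g p) \<subseteq> set p \<and> stpath E S T (g p)"
    using assms by (simp add: linking_def stpath_def)
  with linking_shrink[OF assms] g show ?thesis by (intro exI[of _ "g ` Ps"]) auto
qed

lemma linking_inj_hd: "linking E S T Ps \<Longrightarrow> inj_on hd Ps"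
proof (rule inj_onI)
  fix p q assume L: "linking E S T Ps" and pq: "p \<in> Ps" "q \<in> Ps" "hd p = hd q"
  then have "p \<noteq> []" "q \<noteq> []" by (auto simp: linking_def stpath_def walk_def)
  then have "hd p \<in> set p \<inter> set q" using pq(3) by (metis IntI hd_in_set)
  then show "p = q" using linking_disjoint[OF L pq(1,2)] by blast
qed

lemma linking_inj_last: "linking E S T Ps \<Longrightarrow> inj_on last Ps"
proof (rule inj_onI)
  fix p q assume L: "linking E S T Ps" and pq: "p \<in> Ps" "q \<in> Ps" "last p = last q"
  then have "p \<noteq> []" "q \<noteq> []" by (auto simp: linking_def stpath_def walk_def)
  then have "last p \<in> set p \<inter> set q" using pq(3) by (metis IntI last_in_set)
  then show "p = q" using linking_disjoint[OF L pq(1,2)] by blast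
qed

lemma linking_hd_image:
  assumes "linking E S T Ps" "finite S" "card Ps = card S"
  shows "hd ` Ps = S"
proof -
  have "hd ` Ps \<subseteq> S" using linking_path[OF assms(1)] by blast
  moreover have "card (hd ` Ps) = card S" using assms linking_inj_hd card_image by metis
  ultimately show ?thesis using assms(2) by (simp add: card_subset_eq)
qed

lemma linking_last_image:
  assumes "linking E S T Ps" "finite T" "card Ps = card T"
  shows "last ` Ps = T"
proof -
  have "last ` Ps \<subseteq> T" using linking_path[OF assms(1)] by blast
  moreover have "card (last ` Ps) = card T" using assms linking_inj_last card_image by metis
  ultimately show ?thesis using assms(2) by (simp add: card_subset_eq)
qed

lemma linking_index_by_hd:
  assumes "linking E S T Ps"
  obtains P where "\<forall>z\<in>hd ` Ps. P z \<in> Ps \<and> hd (P z) = z"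
    "\<forall>z\<in>hd ` Ps. \<forall>z'\<in>hd ` Ps. z \<noteq> z' \<longrightarrow> set (P z) \<inter> set (P z') = {}"
proof -
  have P: "\<forall>z\<in>hd ` Ps. inv_into Ps hd z \<in> Ps \<and> hd (inv_into Ps hd z) = z"
    by (auto intro: inv_into_into f_inv_into_f)
  then have "\<forall>z\<in>hd ` Ps. \<forall>z'\<in>hd ` Ps. z \<noteq> z' \<longrightarrow>
      set (inv_into Ps hd z) \<inter> set (inv_into Ps hd z') = {}"
    using linking_disjoint[OF assms] by metis
  with P show ?thesis using that by blast
qed

lemma linking_index_by_last:
  assumes "linking E S T Ps"
  obtains P where "\<forall>z\<in>last ` Ps. P z \<in> Ps \<and> last (P z) = z"
    "\<forall>z\<in>last ` Ps. \<forall>z'\<in>last ` Ps. z \<noteq> z' \<longrightarrow> set (P z) \<inter> set (P z') = {}"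
proof -
  have P: "\<forall>z\<in>last ` Ps. inv_into Ps last z \<in> Ps \<and> last (inv_into Ps last z) = z"
    by (auto intro: inv_into_into f_inv_into_f)
  then have "\<forall>z\<in>last ` Ps. \<forall>z'\<in>last ` Ps. z \<noteq> z' \<longrightarrow>
      set (inv_into Ps last z) \<inter> set (inv_into Ps last z') = {}"
    using linking_disjoint[OF assms] by metis
  with P show ?thesis using that by blast
qed

section \<open>Menger's theorem\<close>

lemma separates_front:
  assumes "separates G S T W" "separates F S W Z"
    and "\<And>q. walk G q \<Longrightarrow> set (butlast q) \<inter> W = {} \<Longrightarrow> walk F q"
  shows "separates G S T Z"
  unfolding separates_def
proof (intro allI impI)
  fix p assume p: "stpath G S T p"
  then have "set p \<inter> W \<noteq> {}" using assms(1) by (auto simp: separates_def)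
  then obtain q where q: "walk G q" "hd q = hd p" "last q \<in> W"
    "set (butlast q) \<inter> W = {}" "set q \<subseteq> set p"
    using walk_first_hit[of G p W] p by (auto simp: stpath_def)
  then have "stpath F S W q" using assms(3) p by (auto simp: stpath_def)
  then show "set p \<inter> Z \<noteq> {}" using assms(2) q(5) by (auto simp: separates_def)
qed

lemma separates_back:
  assumes "separates G S T W" "separates F W T Z"
    and "\<And>q. walk G q \<Longrightarrow> set (tl q) \<inter> W = {} \<Longrightarrow> walk F q"
  shows "separates G S T Z"
  unfolding separates_def
proof (intro allI impI)
  fix p assume p: "stpath G S T p"
  then have "set p \<inter> W \<noteq> {}" using assms(1) by (auto simp: separates_def)
  then obtain q where q: "walk G q" "last q = last p" "hd q \<in> W"
    "set (tl q) \<inter> W = {}" "set q \<subseteq> set p"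
    using walk_last_hit[of G p W] p by (auto simp: stpath_def)
  then have "stpath F W T q" using assms(3) p by (auto simp: stpath_def)
  then show "set p \<inter> Z \<noteq> {}" using assms(2) q(5) by (auto simp: separates_def)
qed

text \<open>If Y separates S from T, a walk from S that avoids Y before its end and a walk to T
  that avoids Y after its start can only meet inside Y: otherwise gluing them at a
  common vertex gives an S-T path missing Y.\<close>

lemma walks_meet_in_separator:
  assumes Y: "separates F S T Y"
    and p: "walk F p" "hd p \<in> S" "set (butlast p) \<inter> Y = {}"
    and q: "walk F q" "last q \<in> T" "set (tl q) \<inter> Y = {}"
  shows "set p \<inter> set q \<subseteq> Y"
proof
  fix w assume w: "w \<in> set p \<inter> set q"
  obtain p1 p2 where pp: "p = p1 @ w # p2" using w split_list by fastforce
  obtain q1 q2 where qq: "q = q1 @ w # q2" using w split_list by fastforce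
  let ?r = "p1 @ w # q2"
  have "walk F ?r" using walk_split[of F p1 w p2] walk_split[of F q1 w q2] p q pp qq
    by (auto intro: walk_glue)
  moreover have "hd ?r = hd p" using pp by (cases p1) auto
  moreover have "last ?r = last q" using qq by simp
  ultimately have "stpath F S T ?r" using p q by (simp add: stpath_def)
  then have r: "set ?r \<inter> Y \<noteq> {}" using Y unfolding separates_def by blast
  have "set p1 \<subseteq> set (butlast p)" using pp by (simp add: butlast_append)
  moreover have "set q2 \<subseteq> set (tl q)" using qq by (cases q1) auto
  ultimately show "w \<in> Y" using r p(3) q(3) by auto
qed

lemma separates_insert_edge:
  assumes "separates F S T Y" "z = x \<or> z = y"
  shows "separates (insert (x, y) F) S T (insert z Y)"
  unfolding separates_def
proof (intro allI impI)
  fix p assume p: "stpath (insert (x, y) F) S T p"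
  show "set p \<inter> insert z Y \<noteq> {}"
  proof (cases "walk F p")
    case True
    then show ?thesis using p assms(1) by (auto simp: separates_def stpath_def)
  next
    case False
    then have "x \<in> set p" "y \<in> set p"
      using walk_insert_edge[of x y F p] p by (auto simp: stpath_def dest: in_set_butlastD in_set_tlD)
    then show ?thesis using assms(2) by auto
  qed
qed

text \<open>Joining the path ending in z \<in> Y with the
  one starting in z, and the path ending in x with the one starting in y via the
  edge (x, y), gives |Y|+1 disjoint S-T paths in F + (x, y).\<close>

lemma linking_splice:
  assumes Y: "separates F S T Y" "finite Y" "x \<notin> Y" "y \<notin> Y"
    and Q1: "linking F S (insert x Y) Q1" "card Q1 = card (insert x Y)"
      "\<forall>p\<in>Q1. set (butlast p) \<inter> insert x Y = {}"
    and Q2: "linking F (insert y Y) T Q2" "card Q2 = card (insert y Y)"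
      "\<forall>q\<in>Q2. set (tl q) \<inter> insert y Y = {}"
  shows "\<exists>Ps. linking (insert (x, y) F) S T Ps \<and> card Ps = card (insert x Y)"
proof -
  obtain P where P: "\<forall>z\<in>insert x Y. P z \<in> Q1 \<and> last (P z) = z"
    "\<forall>z\<in>insert x Y. \<forall>z'\<in>insert x Y. z \<noteq> z' \<longrightarrow> set (P z) \<inter> set (P z') = {}"
    using linking_index_by_last[OF Q1(1)] linking_last_image[OF Q1(1)] Q1(2) Y(2) by auto
  obtain Q where Q: "\<forall>z\<in>insert y Y. Q z \<in> Q2 \<and> hd (Q z) = z"
    "\<forall>z\<in>insert y Y. \<forall>z'\<in>insert y Y. z \<noteq> z' \<longrightarrow> set (Q z) \<inter> set (Q z') = {}"
    using linking_index_by_hd[OF Q2(1)] linking_hd_image[OF Q2(1)] Q2(2) Y(2) by auto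
  have Pz: "walk F (P z)" "hd (P z) \<in> S" "last (P z) = z"
    "set (butlast (P z)) \<inter> insert x Y = {}" if "z \<in> insert x Y" for z
    using P(1) Q1(1,3) that by (auto simp: linking_def stpath_def)
  have Qu: "walk F (Q u)" "last (Q u) \<in> T" "hd (Q u) = u"
    "set (tl (Q u)) \<inter> insert y Y = {}" if "u \<in> insert y Y" for u
    using Q(1) Q2(1,3) that by (auto simp: linking_def stpath_def)
  have meet: "set (P z) \<inter> set (Q u) \<subseteq> Y" if "z \<in> insert x Y" "u \<in> insert y Y" for z u
    using walks_meet_in_separator[OF Y(1) Pz(1,2) _ Qu(1,2)] Pz(4) Qu(4) that by blast
  define g where "g z = (if z = x then y else z)" for z
  define tail where "tail z = (if z = x then Q y else tl (Q z))" for z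
  have g: "g z \<in> insert y Y" if "z \<in> insert x Y" for z
    using that by (auto simp: g_def)
  have g_inj: "g z \<noteq> g z'" if "z \<in> insert x Y" "z' \<in> insert x Y" "z \<noteq> z'" for z z'
    using that Y(3,4) by (auto simp: g_def)
  have tail_sub: "set (tail z) \<subseteq> set (Q (g z))" for z
    by (auto simp: tail_def g_def dest: in_set_tlD)
  have tail_Y: "set (tail z) \<inter> Y = {}" if "z \<in> insert x Y" for z
  proof (cases "z = x")
    case True
    have "set (Q y) \<subseteq> insert y (set (tl (Q y)))"
      using Qu(3)[of y] by (cases "Q y") auto
    then show ?thesis using True Qu(4)[of y] Y(4) by (auto simp: tail_def)
  next
    case False
    then show ?thesis using that Qu(4)[of z] by (auto simp: tail_def)
  qed
  define R where "R z = P z @ tail z" for z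
  have R_path: "stpath (insert (x, y) F) S T (R z)" if "z \<in> insert x Y" for z
  proof (cases "z = x")
    case True
    then show ?thesis using Pz[OF that] Qu[of y]
      by (auto simp: R_def tail_def intro!: stpath_append intro: walk_mono)
  next
    case False
    then have "z \<in> insert y Y" using that by simp
    then show ?thesis using False Pz[OF that] Qu[of z]
      by (auto simp: R_def tail_def intro!: stpath_append_tl intro: walk_mono)
  qed
  have R_disj: "set (R z) \<inter> set (R z') = {}"
    if "z \<in> insert x Y" "z' \<in> insert x Y" "z \<noteq> z'" for z z'
  proof -
    have "set (P z) \<inter> set (P z') = {}" using P(2) that by blast
    moreover have "set (tail z) \<inter> set (tail z') = {}"
    proof -
      have "set (Q (g z)) \<inter> set (Q (g z')) = {}"
        using Q(2) g[OF that(1)] g[OF that(2)] g_inj[OF that] by blast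
      then show ?thesis using tail_sub[of z] tail_sub[of z'] by blast
    qed
    moreover have "set (P z) \<inter> set (tail z') = {}"
      using meet[OF that(1) g[OF that(2)]] tail_sub[of z'] tail_Y[OF that(2)] by blast
    moreover have "set (P z') \<inter> set (tail z) = {}"
      using meet[OF that(2) g[OF that(1)]] tail_sub[of z] tail_Y[OF that(1)] by blast
    ultimately show ?thesis by (auto simp: R_def)
  qed
  show ?thesis using linking_of_family[of "insert x Y" _ S T R] R_path R_disj by blast
qed

text \<open>The proof is by induction on
  the edge set: if deleting the edge (x, y) leaves a separator Y smaller than k, then
  Y \<union> {x} and Y \<union> {y} are minimum separators, and induction on both sides of them
  yields the linkings that the splicing lemma joins together.\<close>

theorem menger:
  assumes "finite E" "finite S"
    and "\<And>X. finite X \<Longrightarrow> separates E S T X \<Longrightarrow> k \<le> card X"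
  shows "\<exists>Ps. linking E S T Ps \<and> card Ps = k"
  using assms
proof (induction E arbitrary: S T k rule: finite_induct)
  case empty
  have "walk {} p \<longleftrightarrow> (\<exists>a. p = [a])" for p :: "'a list"
    by (cases p) (auto simp: walk_def successively_Cons)
  then have "separates {} S T (S \<inter> T)"
    by (auto simp: separates_def stpath_def)
  then have "k \<le> card (S \<inter> T)" using empty by auto
  then obtain Z where Z: "Z \<subseteq> S \<inter> T" "card Z = k" using obtain_subset_with_card_n by metis
  have "linking {} S T ((\<lambda>a. [a]) ` Z)" "card ((\<lambda>a. [a]) ` Z) = card Z"
    using linking_of_family[of Z "{}" S T "\<lambda>a. [a]"] Z by (auto simp: stpath_def)
  then show ?case using Z by blast
next
  case (insert e F)
  obtain x y where e: "e = (x, y)" by (cases e)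
  let ?G = "insert e F"
  show ?case
  proof (cases "\<forall>X. finite X \<longrightarrow> separates F S T X \<longrightarrow> k \<le> card X")
    case True
    then show ?thesis using insert.IH[OF insert.prems(1)] linking_mono[of F S T _ ?G] by blast
  next
    case False
    then obtain Y where Y: "finite Y" "separates F S T Y" "card Y < k" by (auto simp: not_le)
    have avoid_x: "walk F q" if "walk ?G q" "x \<notin> set (butlast q)" for q
      using walk_insert_edge[of x y F q] that e by auto
    have avoid_y: "walk F q" if "walk ?G q" "y \<notin> set (tl q)" for q
      using walk_insert_edge[of x y F q] that e by auto
    have sep: "separates ?G S T (insert z Y)" if "z = x \<or> z = y" for z
      using separates_insert_edge[OF Y(2)] that e by blast
    have card_xY: "card (insert z Y) = k" "z \<notin> Y" if "z = x \<or> z = y" for z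
      using insert.prems(2)[OF _ sep[OF that]] Y(1,3) by (auto simp: card_insert_if split: if_splits)
    have "\<exists>Ps. linking F S (insert x Y) Ps \<and> card Ps = k"
    proof (rule insert.IH[OF insert.prems(1)])
      fix Z assume "finite Z" "separates F S (insert x Y) Z"
      then show "k \<le> card Z"
        using separates_front[OF sep[of x]] avoid_x insert.prems(2) by blast
    qed
    then obtain Q1 where Q1: "linking F S (insert x Y) Q1" "card Q1 = k"
      "\<forall>p\<in>Q1. set (butlast p) \<inter> insert x Y = {}"
      using linking_trim_front by metis
    have "\<exists>Ps. linking F (insert y Y) T Ps \<and> card Ps = k"
    proof (rule insert.IH)
      fix Z assume "finite Z" "separates F (insert y Y) T Z"
      then show "k \<le> card Z"
        using separates_back[OF sep[of y]] avoid_y insert.prems(2) by blast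
    qed (use Y(1) in simp)
    then obtain Q2 where Q2: "linking F (insert y Y) T Q2" "card Q2 = k"
      "\<forall>q\<in>Q2. set (tl q) \<inter> insert y Y = {}"
      using linking_trim_back by metis
    show ?thesis
      using linking_splice[OF Y(2,1) card_xY(2) card_xY(2) Q1(1) _ Q1(3) Q2(1) _ Q2(3)]
        card_xY(1) Q1(2) Q2(2) e by auto
  qed
qed

section \<open>Flows\<close>

lemma outflow_edges:
  assumes "E \<subseteq> N \<times> N"
  shows "outflow N E f x = sum f {e\<in>E. fst e = x}"
proof -
  have "{e\<in>E. fst e = x} = Pair x ` {w\<in>N. (x, w) \<in> E}" using assms by force
  then show ?thesis by (simp add: outflow_def sum.reindex inj_on_def)
qed

lemma inflow_edges:
  assumes "E \<subseteq> N \<times> N"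
  shows "inflow N E f x = sum f {e\<in>E. snd e = x}"
proof -
  have "{e\<in>E. snd e = x} = (\<lambda>u. (u, x)) ` {u\<in>N. (u, x) \<in> E}" using assms by force
  then show ?thesis by (simp add: inflow_def sum.reindex inj_on_def)
qed

lemma sum_outflow:
  assumes "E \<subseteq> N \<times> N" "finite E" "finite U"
  shows "(\<Sum>x\<in>U. outflow N E f x) = sum f {e\<in>E. fst e \<in> U}"
proof -
  have "(\<Sum>x\<in>U. outflow N E f x) = (\<Sum>y\<in>U. sum f {e\<in>{e\<in>E. fst e \<in> U}. fst e = y})"
    by (rule sum.cong) (auto simp: outflow_edges[OF assms(1)] intro!: sum.cong)
  also have "\<dots> = sum f {e\<in>E. fst e \<in> U}"
    by (rule sum.group) (use assms in auto)
  finally show ?thesis .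
qed

lemma sum_inflow:
  assumes "E \<subseteq> N \<times> N" "finite E" "finite U"
  shows "(\<Sum>x\<in>U. inflow N E f x) = sum f {e\<in>E. snd e \<in> U}"
proof -
  have "(\<Sum>x\<in>U. inflow N E f x) = (\<Sum>y\<in>U. sum f {e\<in>{e\<in>E. snd e \<in> U}. snd e = y})"
    by (rule sum.cong) (auto simp: inflow_edges[OF assms(1)] intro!: sum.cong)
  also have "\<dots> = sum f {e\<in>E. snd e \<in> U}"
    by (rule sum.group) (use assms in auto)
  finally show ?thesis .
qed

text \<open>Summing
  conservation over U leaves the edges leaving U minus those entering it.\<close>

lemma flow_le_cut:
  assumes E: "E \<subseteq> N \<times> N" "finite E" and f: "is_flow N E s t cV cD f"
    and U: "finite U" "U \<subseteq> N" "s \<in> U" "t \<notin> U" and into_s: "\<forall>e\<in>E. snd e \<noteq> s"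
  shows "flow_size N E s f \<le> sum f {e\<in>E. fst e \<in> U \<and> snd e \<notin> U}"
proof -
  let ?out = "outflow N E f" and ?in = "inflow N E f"
  have no_in: "{e\<in>E. snd e = s} = {}" using into_s by auto
  have "?in s = 0" unfolding inflow_edges[OF E(1)] no_in by simp
  moreover have "(\<Sum>x\<in>U - {s}. ?in x) = (\<Sum>x\<in>U - {s}. ?out x)"
    using f U by (intro sum.cong) (auto simp: is_flow_def)
  ultimately have "flow_size N E s f = (\<Sum>x\<in>U. ?out x) - (\<Sum>x\<in>U. ?in x)"
    using U by (simp add: flow_size_def sum.remove)
  also have "\<dots> = sum f {e\<in>E. fst e \<in> U} - sum f {e\<in>E. snd e \<in> U}"
    using E U by (simp add: sum_outflow sum_inflow)
  also have "\<dots> = sum f {e\<in>E. fst e \<in> U \<and> snd e \<notin> U} - sum f {e\<in>E. fst e \<notin> U \<and> snd e \<in> U}"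
  proof -
    have "{e\<in>E. fst e \<in> U} = {e\<in>E. fst e \<in> U \<and> snd e \<in> U} \<union> {e\<in>E. fst e \<in> U \<and> snd e \<notin> U}"
      "{e\<in>E. snd e \<in> U} = {e\<in>E. fst e \<in> U \<and> snd e \<in> U} \<union> {e\<in>E. fst e \<notin> U \<and> snd e \<in> U}"
      by auto
    then show ?thesis using E(2) by (simp add: sum.union_disjoint disjoint_iff)
  qed
  also have "\<dots> \<le> sum f {e\<in>E. fst e \<in> U \<and> snd e \<notin> U}"
    using f by (auto simp: is_flow_def intro!: sum_nonneg)
  finally show ?thesis .
qed

definition path_edges :: "'a list \<Rightarrow> ('a \<times> 'a) set" where
  "path_edges xs = set (zip xs (tl xs))"

lemma path_edges_Nil [simp]: "path_edges [] = {}"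
  by (simp add: path_edges_def)

lemma path_edges_Cons:
  "path_edges (a # xs) = (if xs = [] then {} else {(a, hd xs)}) \<union> path_edges xs"
  by (cases xs) (auto simp: path_edges_def)

lemma path_edges_subset: "walk E xs \<Longrightarrow> path_edges xs \<subseteq> E"
  by (induction xs) (auto simp: path_edges_Cons walk_Cons)

lemma path_edges_vertices: "(u, w) \<in> path_edges xs \<Longrightarrow> u \<in> set xs \<and> w \<in> set xs"
  by (auto simp: path_edges_def dest: set_zip_leftD set_zip_rightD in_set_tlD)

lemma card_path_edges_in:
  "distinct xs \<Longrightarrow> card {u. (u, x) \<in> path_edges xs} = (if x \<in> set (tl xs) then 1 else 0)"
proof (induction xs)
  case (Cons a xs)
  have fin: "finite {u. (u, x) \<in> path_edges xs}"
    by (rule finite_subset[of _ "set xs"]) (auto dest: path_edges_vertices)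
  have split: "{u. (u, x) \<in> path_edges (a # xs)}
      = (if xs \<noteq> [] \<and> x = hd xs then {a} else {}) \<union> {u. (u, x) \<in> path_edges xs}"
    by (auto simp: path_edges_Cons)
  show ?case
  proof (cases "xs \<noteq> [] \<and> x = hd xs")
    case True
    then have "x \<notin> set (tl xs)" using Cons.prems by (cases xs) auto
    then have "{u. (u, x) \<in> path_edges xs} = {}" using Cons.IH Cons.prems fin by auto
    then show ?thesis using split True by (cases xs) auto
  next
    case False
    then have "x \<in> set (tl (a # xs)) \<longleftrightarrow> x \<in> set (tl xs)" by (cases xs) auto
    then show ?thesis using split False Cons.IH Cons.prems by simp
  qed
qed simp

lemma card_path_edges_out:
  "distinct xs \<Longrightarrow> card {w. (x, w) \<in> path_edges xs} = (if x \<in> set (butlast xs) then 1 else 0)"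
proof (induction xs)
  case (Cons a xs)
  have fin: "finite {w. (x, w) \<in> path_edges xs}"
    by (rule finite_subset[of _ "set xs"]) (auto dest: path_edges_vertices)
  have split: "{w. (x, w) \<in> path_edges (a # xs)}
      = (if xs \<noteq> [] \<and> x = a then {hd xs} else {}) \<union> {w. (x, w) \<in> path_edges xs}"
    by (auto simp: path_edges_Cons)
  show ?case
  proof (cases "xs \<noteq> [] \<and> x = a")
    case True
    then have "x \<notin> set (butlast xs)" using Cons.prems by (auto dest: in_set_butlastD)
    then have "{w. (x, w) \<in> path_edges xs} = {}" using Cons.IH Cons.prems fin by auto
    then show ?thesis using split True by simp
  next
    case False
    then show ?thesis using split Cons.IH Cons.prems by auto
  qed
qed simp

lemma inflow_unit_paths:
  assumes "E \<subseteq> N \<times> N" "finite N" "finite Ps" "\<forall>p\<in>Ps. path_edges (g p) \<subseteq> E \<and> distinct (g p)"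
  shows "inflow N E (\<lambda>e. \<Sum>p\<in>Ps. if e \<in> path_edges (g p) then 1 else 0) x
         = real (card {p\<in>Ps. x \<in> set (tl (g p))})"
proof -
  let ?In = "{u\<in>N. (u, x) \<in> E}"
  have "inflow N E (\<lambda>e. \<Sum>p\<in>Ps. if e \<in> path_edges (g p) then 1 else 0) x
        = (\<Sum>u\<in>?In. \<Sum>p\<in>Ps. if (u, x) \<in> path_edges (g p) then 1 else 0)"
    unfolding inflow_def ..
  also have "\<dots> = (\<Sum>p\<in>Ps. \<Sum>u\<in>?In. if (u, x) \<in> path_edges (g p) then 1 else 0)"
    by (rule sum.swap)
  also have "\<dots> = (\<Sum>p\<in>Ps. real (card {u\<in>?In. (u, x) \<in> path_edges (g p)}))"
    using assms(2) by (simp add: sum.inter_filter[symmetric])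
  also have "\<dots> = (\<Sum>p\<in>Ps. if x \<in> set (tl (g p)) then 1 else 0)"
  proof (rule sum.cong[OF refl])
    fix p assume "p \<in> Ps"
    then have "{u\<in>?In. (u, x) \<in> path_edges (g p)} = {u. (u, x) \<in> path_edges (g p)}"
      using assms(1,4) by auto
    then show "real (card {u\<in>?In. (u, x) \<in> path_edges (g p)}) = (if x \<in> set (tl (g p)) then 1 else 0)"
      using card_path_edges_in[of "g p" x] assms(4) \<open>p \<in> Ps\<close> by simp
  qed
  finally show ?thesis using assms(3) by (simp add: sum.inter_filter[symmetric])
qed

lemma outflow_unit_paths:
  assumes "E \<subseteq> N \<times> N" "finite N" "finite Ps" "\<forall>p\<in>Ps. path_edges (g p) \<subseteq> E \<and> distinct (g p)"
  shows "outflow N E (\<lambda>e. \<Sum>p\<in>Ps. if e \<in> path_edges (g p) then 1 else 0) x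
         = real (card {p\<in>Ps. x \<in> set (butlast (g p))})"
proof -
  let ?Out = "{w\<in>N. (x, w) \<in> E}"
  have "outflow N E (\<lambda>e. \<Sum>p\<in>Ps. if e \<in> path_edges (g p) then 1 else 0) x
        = (\<Sum>w\<in>?Out. \<Sum>p\<in>Ps. if (x, w) \<in> path_edges (g p) then 1 else 0)"
    unfolding outflow_def ..
  also have "\<dots> = (\<Sum>p\<in>Ps. \<Sum>w\<in>?Out. if (x, w) \<in> path_edges (g p) then 1 else 0)"
    by (rule sum.swap)
  also have "\<dots> = (\<Sum>p\<in>Ps. real (card {w\<in>?Out. (x, w) \<in> path_edges (g p)}))"
    using assms(2) by (simp add: sum.inter_filter[symmetric])
  also have "\<dots> = (\<Sum>p\<in>Ps. if x \<in> set (butlast (g p)) then 1 else 0)"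
  proof (rule sum.cong[OF refl])
    fix p assume "p \<in> Ps"
    then have "{w\<in>?Out. (x, w) \<in> path_edges (g p)} = {w. (x, w) \<in> path_edges (g p)}"
      using assms(1,4) by auto
    then show "real (card {w\<in>?Out. (x, w) \<in> path_edges (g p)}) = (if x \<in> set (butlast (g p)) then 1 else 0)"
      using card_path_edges_out[of "g p" x] assms(4) \<open>p \<in> Ps\<close> by simp
  qed
  finally show ?thesis using assms(3) by (simp add: sum.inter_filter[symmetric])
qed

definition reach_avoiding :: "('a \<times> 'a) set \<Rightarrow> 'a set \<Rightarrow> 'a set \<Rightarrow> 'a set" where
  "reach_avoiding E S X = {z. \<exists>p. walk E p \<and> hd p \<in> S \<and> last p = z \<and> set p \<inter> X = {}}"

lemma reach_avoiding_start: "z \<in> S \<Longrightarrow> z \<notin> X \<Longrightarrow> z \<in> reach_avoiding E S X"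
  unfolding reach_avoiding_def by (intro CollectI exI[of _ "[z]"]) auto

lemma reach_avoiding_step:
  assumes "z \<in> reach_avoiding E S X" "(z, w) \<in> E" "w \<notin> X"
  shows "w \<in> reach_avoiding E S X"
proof -
  obtain p where p: "walk E p" "hd p \<in> S" "last p = z" "set p \<inter> X = {}"
    using assms(1) by (auto simp: reach_avoiding_def)
  then have "walk E (p @ [w])" "hd (p @ [w]) = hd p"
    using assms(2) walk_nonempty[OF p(1)] by (auto intro: walk_append)
  then show ?thesis using p assms(3) unfolding reach_avoiding_def
    by (intro CollectI exI[of _ "p @ [w]"]) auto
qed

lemma reach_avoiding_subset:
  assumes "E \<subseteq> V \<times> V" "S \<subseteq> V"
  shows "reach_avoiding E S X \<subseteq> V"
proof
  fix z assume "z \<in> reach_avoiding E S X"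
  then obtain p where p: "walk E p" "hd p \<in> S" "last p = z"
    by (auto simp: reach_avoiding_def)
  then have "set p \<subseteq> V" using walk_vertices assms by blast
  then show "z \<in> V" using p walk_nonempty last_in_set by blast
qed

lemma reach_avoiding_separated:
  "separates E S T X \<Longrightarrow> reach_avoiding E S X \<inter> T = {}"
  unfolding reach_avoiding_def separates_def stpath_def by blast

lemma separates_restrict:
  assumes "separates E S T X" "E \<subseteq> V \<times> V" "S \<subseteq> V"
  shows "separates E S T (X \<inter> V)"
  unfolding separates_def
proof (intro allI impI)
  fix p assume p: "stpath E S T p"
  then have "set p \<subseteq> V" using walk_vertices[of E p V] assms(2,3) by (auto simp: stpath_def)
  moreover have "set p \<inter> X \<noteq> {}" using p assms(1) by (auto simp: separates_def)
  ultimately show "set p \<inter> (X \<inter> V) \<noteq> {}" by blast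
qed

lemma separates_target: "separates E S T T"
  unfolding separates_def stpath_def using walk_nonempty last_in_set by blast

section \<open>Networks with unit node capacities\<close>

definition netN :: "'n \<Rightarrow> 'n \<Rightarrow> 'n set \<Rightarrow> 'n set" where
  "netN s t VH = insert s (insert t VH)"

definition netE :: "'n \<Rightarrow> 'n \<Rightarrow> 'n set \<Rightarrow> ('n \<times> 'n) set \<Rightarrow> 'n set \<Rightarrow> ('n \<times> 'n) set" where
  "netE s t S EH T = Pair s ` S \<union> EH \<union> (\<lambda>x. (x, t)) ` T"

locale unit_network =
  fixes VH :: "'n set" and EH :: "('n \<times> 'n) set" and S T :: "'n set" and s t :: 'n
    and cV :: "'n \<Rightarrow> ereal" and cD :: "'n \<times> 'n \<Rightarrow> ereal"
  assumes finite_VH: "finite VH" and s_VH: "s \<notin> VH" and t_VH: "t \<notin> VH" and s_t: "s \<noteq> t"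
    and EH_VH: "EH \<subseteq> VH \<times> VH" and S_VH: "S \<subseteq> VH" and T_VH: "T \<subseteq> VH"
    and cV_unit: "\<forall>x\<in>VH. cV x = 1" and cD_infinite: "\<forall>e. cD e = \<infinity>"
begin

abbreviation N :: "'n set" where "N \<equiv> netN s t VH"
abbreviation E :: "('n \<times> 'n) set" where "E \<equiv> netE s t S EH T"

lemma E_N: "E \<subseteq> N \<times> N"
  using EH_VH S_VH T_VH by (auto simp: netN_def netE_def)

lemma finite_N: "finite N"
  using finite_VH by (simp add: netN_def)

lemma finite_E: "finite E"
  using finite_subset[OF E_N] finite_N by blast

lemma no_edge_into_source: "\<forall>e\<in>E. snd e \<noteq> s"
  using EH_VH S_VH s_VH s_t by (auto simp: netE_def)

text \<open>Every flow is bounded by the size of any separator X: cut the network along the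
  vertices reachable from S avoiding X; every edge leaving the cut enters X, and
  each vertex of X carries at most one unit.\<close>

lemma flow_le_separator:
  assumes f: "is_flow N E s t cV cD f" and X: "X \<subseteq> VH" "separates EH S T X"
  shows "flow_size N E s f \<le> real (card X)"
proof -
  define U where "U = insert s (reach_avoiding EH S X)"
  have R_VH: "reach_avoiding EH S X \<subseteq> VH" by (rule reach_avoiding_subset[OF EH_VH S_VH])
  have U: "finite U" "U \<subseteq> N" "s \<in> U" "t \<notin> U"
    using R_VH finite_VH t_VH s_t finite_subset by (auto simp: U_def netN_def)
  have enters_X: "w \<in> X" if e: "(u, w) \<in> E" "u \<in> U" "w \<notin> U" for u w
  proof (cases "u = s")
    case True
    then have "w \<in> S" using e s_VH EH_VH T_VH by (auto simp: netE_def)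
    then show ?thesis using e reach_avoiding_start by (fastforce simp: U_def)
  next
    case False
    then have u: "u \<in> reach_avoiding EH S X" using e by (simp add: U_def)
    then have "u \<notin> T" using reach_avoiding_separated[OF X(2)] by blast
    then have "(u, w) \<in> EH" using e False by (auto simp: netE_def)
    then show ?thesis using e u reach_avoiding_step by (fastforce simp: U_def)
  qed
  then have leaving: "{e\<in>E. fst e \<in> U \<and> snd e \<notin> U} \<subseteq> {e\<in>E. snd e \<in> X}"
    by auto
  have f_nonneg: "\<forall>e\<in>E. 0 \<le> f e" using f by (simp add: is_flow_def)
  have "flow_size N E s f \<le> sum f {e\<in>E. fst e \<in> U \<and> snd e \<notin> U}"
    by (rule flow_le_cut[OF E_N finite_E f U no_edge_into_source])
  also have "\<dots> \<le> sum f {e\<in>E. snd e \<in> X}"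
    using leaving finite_E f_nonneg by (intro sum_mono2) auto
  also have "\<dots> = (\<Sum>x\<in>X. inflow N E f x)"
    using sum_inflow[OF E_N finite_E finite_subset[OF X(1) finite_VH]] by simp
  also have "\<dots> \<le> (\<Sum>x\<in>X. 1)"
  proof (rule sum_mono)
    fix x assume "x \<in> X"
    then have "x \<in> N - {s, t}" "cV x = 1" using X(1) s_VH t_VH cV_unit by (auto simp: netN_def)
    then have "ereal (inflow N E f x) \<le> 1" using f unfolding is_flow_def by metis
    then show "inflow N E f x \<le> 1" by simp
  qed
  finally show ?thesis by simp
qed

lemma extended_path:
  assumes p: "stpath EH S T p" and D: "distinct p"
  shows "walk E (s # p @ [t]) \<and> distinct (s # p @ [t])"
proof -
  have walk: "walk EH p" "hd p \<in> S" "last p \<in> T" "p \<noteq> []"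
    using p walk_nonempty by (auto simp: stpath_def)
  have "EH \<subseteq> E" by (auto simp: netE_def)
  then have "walk E p" using walk(1) walk_mono by blast
  moreover have "(last p, t) \<in> E" "(s, hd p) \<in> E" using walk(2,3) by (auto simp: netE_def)
  ultimately have "walk E (s # p @ [t])"
    using walk(4) walk_append[of E "[s]" "p @ [t]"] walk_append[of E p "[t]"] by simp
  moreover have "set p \<subseteq> VH" using walk_vertices[OF walk(1) EH_VH] walk(2) S_VH by blast
  then have "distinct (s # p @ [t])" using D s_VH t_VH s_t by auto
  ultimately show ?thesis by blast
qed

lemma flow_of_linking:
  assumes L: "linking EH S T Ps" and D: "\<forall>p\<in>Ps. distinct p"
  shows "\<exists>f. is_flow N E s t cV cD f \<and> flow_size N E s f = real (card Ps)"
proof -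
  define ext where "ext p = s # p @ [t]" for p
  define f where "f e = (\<Sum>p\<in>Ps. if e \<in> path_edges (ext p) then 1 else 0 :: real)" for e
  have "hd ` Ps \<subseteq> VH" using linking_path[OF L] S_VH by blast
  then have "finite (hd ` Ps)" by (rule finite_subset[OF _ finite_VH])
  then have fin: "finite Ps" by (rule finite_imageD[OF _ linking_inj_hd[OF L]])
  have ext: "\<forall>p\<in>Ps. path_edges (ext p) \<subseteq> E \<and> distinct (ext p)"
    using extended_path L D path_edges_subset unfolding ext_def linking_def by blast
  have through: "{p\<in>Ps. x \<in> set (tl (ext p))} = {p\<in>Ps. x \<in> set p}"
    "{p\<in>Ps. x \<in> set (butlast (ext p))} = {p\<in>Ps. x \<in> set p}" if "x \<in> VH" for x
    using that s_VH t_VH by (auto simp: ext_def butlast_append)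
  have at_most_one: "card {p\<in>Ps. x \<in> set p} \<le> 1" for x
  proof -
    have "\<forall>p\<in>{p\<in>Ps. x \<in> set p}. \<forall>q\<in>{p\<in>Ps. x \<in> set p}. p = q"
      using linking_disjoint[OF L] by blast
    then show ?thesis using fin card_le_Suc0_iff_eq[of "{p\<in>Ps. x \<in> set p}"] by simp
  qed
  have "{p\<in>Ps. s \<in> set (butlast (ext p))} = Ps" by (simp add: ext_def)
  then have size: "outflow N E f s = real (card Ps)"
    using outflow_unit_paths[OF E_N finite_N fin ext] unfolding f_def by simp
  have "is_flow N E s t cV cD f"
    unfolding is_flow_def
  proof (intro conjI ballI)
    fix e show "0 \<le> f e" unfolding f_def by (rule sum_nonneg) simp
    show "ereal (f e) \<le> cD e" by (simp add: cD_infinite[rule_format])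
  next
    fix x assume "x \<in> N - {s, t}"
    then have x: "x \<in> VH" by (auto simp: netN_def)
    have "inflow N E f x = real (card {p\<in>Ps. x \<in> set p})"
      using inflow_unit_paths[OF E_N finite_N fin ext] through(1)[OF x] unfolding f_def by simp
    moreover have "outflow N E f x = real (card {p\<in>Ps. x \<in> set p})"
      using outflow_unit_paths[OF E_N finite_N fin ext] through(2)[OF x] unfolding f_def by simp
    ultimately show "inflow N E f x = outflow N E f x" "ereal (inflow N E f x) \<le> cV x"
      using at_most_one[of x] cV_unit x by simp_all
  qed
  then show ?thesis using size by (auto simp: flow_size_def)
qed

text \<open>The maximum flow equals |T| iff T can be linked from S: one direction is Menger's
  theorem applied through the bound of flows by separators, the other the flow of a
  linking together with the separator T.\<close>

theorem max_flow_iff_linking: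
  "max_flow_size N E s t cV cD (real (card T)) \<longleftrightarrow> (\<exists>Ps. linking EH S T Ps \<and> card Ps = card T)"
proof
  assume "max_flow_size N E s t cV cD (real (card T))"
  then obtain f where f: "is_flow N E s t cV cD f" "flow_size N E s f = real (card T)"
    unfolding max_flow_size_def by blast
  show "\<exists>Ps. linking EH S T Ps \<and> card Ps = card T"
  proof (rule menger)
    show "finite EH" "finite S"
      using finite_subset[OF EH_VH] finite_subset[OF S_VH] finite_VH by auto
    fix X assume "finite X" "separates EH S T X"
    then have "card T \<le> card (X \<inter> VH)"
      using flow_le_separator[OF f(1) _ separates_restrict[OF _ EH_VH S_VH]] f(2) by auto
    also have "\<dots> \<le> card X" using \<open>finite X\<close> by (intro card_mono) auto
    finally show "card T \<le> card X" .
  qed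
next
  assume "\<exists>Ps. linking EH S T Ps \<and> card Ps = card T"
  then obtain Ps where "linking EH S T Ps" "card Ps = card T" "\<forall>p\<in>Ps. distinct p"
    using linking_distinct by metis
  then obtain f where "is_flow N E s t cV cD f" "flow_size N E s f = real (card T)"
    using flow_of_linking by metis
  moreover have "flow_size N E s g \<le> real (card T)" if "is_flow N E s t cV cD g" for g
    using flow_le_separator[OF that T_VH separates_target] .
  ultimately show "max_flow_size N E s t cV cD (real (card T))"
    unfolding max_flow_size_def by blast
qed

end

section \<open>The flow network of the half-trek criterion\<close>

definition htc_digraph ::
  "nat \<Rightarrow> (nat \<times> nat) set \<Rightarrow> (nat \<times> nat) set \<Rightarrow> nat set \<Rightarrow> (fnode \<times> fnode) set" where
  "htc_digraph m D B A =
     {(L a, R a) | a. a \<in> A} \<union>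
     {(L a, R w) | a w. a \<in> A \<and> w \<in> verts m \<and> (a, w) \<in> B} \<union>
     {(R w, R u) | w u. w \<in> verts m \<and> u \<in> verts m \<and> (w, u) \<in> D}"

lemma gflow_nodes_net: "gflow_nodes m A = netN Src Snk (L ` A \<union> R ` verts m)"
  by (auto simp: gflow_nodes_def netN_def)

lemma gflow_edges_net:
  assumes "pa D v \<subseteq> verts m"
  shows "gflow_edges m D B v A = netE Src Snk (L ` A) (htc_digraph m D B A) (R ` pa D v)"
  using assms by (auto simp: gflow_edges_def netE_def htc_digraph_def)

lemma pa_verts: "mixed_graph m D B \<Longrightarrow> pa D v \<subseteq> verts m"
  by (auto simp: mixed_graph_def pa_def)

lemma gflow_unit_network:
  assumes "mixed_graph m D B" "A \<subseteq> verts m"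
  shows "unit_network (L ` A \<union> R ` verts m) (htc_digraph m D B A) (L ` A) (R ` pa D v)
           Src Snk gflow_cV gflow_cD"
proof -
  have "finite A" using finite_subset[OF assms(2)] by (simp add: verts_def)
  then show ?thesis using assms pa_verts[OF assms(1), of v]
    by unfold_locales (auto simp: verts_def htc_digraph_def gflow_cV_def gflow_cD_def mixed_graph_def)
qed

text \<open>Walks in the digraph: right copies only lead to right copies, so every walk is
  a right-copy image of a directed path of G, possibly preceded by one left copy.\<close>

lemma walk_from_R:
  "walk (htc_digraph m D B A) q \<Longrightarrow> hd q \<in> range R \<Longrightarrow> \<exists>ws. q = map R ws"
proof (induction q)
  case (Cons x q)
  then obtain w where x: "x = R w" by auto
  show ?case
  proof (cases "q = []")
    case True then show ?thesis using x by (intro exI[of _ "[w]"]) simp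
  next
    case False
    then have "(R w, hd q) \<in> htc_digraph m D B A" "walk (htc_digraph m D B A) q"
      using Cons.prems x by (auto simp: walk_Cons)
    then have "hd q \<in> range R" by (auto simp: htc_digraph_def)
    then obtain ws where "q = map R ws" using Cons.IH \<open>walk _ q\<close> by blast
    then show ?thesis using x by (intro exI[of _ "w # ws"]) simp
  qed
qed simp

lemma walk_from_L:
  assumes "walk (htc_digraph m D B A) p" "hd p = L a"
  shows "\<exists>ws. p = L a # map R ws"
proof (cases "tl p = []")
  case True
  then show ?thesis using assms walk_nonempty by (intro exI[of _ "[]"]) (cases p; auto)
next
  case False
  then have "(L a, hd (tl p)) \<in> htc_digraph m D B A" "walk (htc_digraph m D B A) (tl p)"
    using assms by (cases p; auto simp: walk_Cons)+
  then have "hd (tl p) \<in> range R" by (auto simp: htc_digraph_def)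
  then show ?thesis using walk_from_R[OF \<open>walk _ (tl p)\<close>] assms walk_nonempty
    by (cases p) auto
qed

lemma walk_map_R:
  assumes "mixed_graph m D B"
  shows "walk (htc_digraph m D B A) (map R ws) \<longleftrightarrow>
         ws \<noteq> [] \<and> successively (\<lambda>a b. (a, b) \<in> D) ws"
proof (induction ws)
  case (Cons w ws)
  have "(R w, R u) \<in> htc_digraph m D B A \<longleftrightarrow> (w, u) \<in> D" for u
    using assms by (auto simp: htc_digraph_def mixed_graph_def)
  then show ?case using Cons by (cases ws) (auto simp: walk_Cons successively_Cons)
qed (simp add: walk_def)

text \<open>In a mixed graph without self-loops the flag of a half-trek is determined: it
  starts with a bidirected edge iff its first right-side vertex differs from the source.\<close>

lemma half_trek_flag:
  assumes "mixed_graph m D B" "half_trek D B y w (bid, ws)"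
  shows "bid \<longleftrightarrow> hd ws \<noteq> y"
  using assms by (auto simp: half_trek_def mixed_graph_def split: if_splits)

lemma walk_L_iff_half_trek:
  assumes "mixed_graph m D B" "a \<in> A" "ws \<noteq> []"
  shows "walk (htc_digraph m D B A) (L a # map R ws) \<longleftrightarrow> half_trek D B a (last ws) (hd ws \<noteq> a, ws)"
proof -
  have "(L a, R w) \<in> htc_digraph m D B A \<longleftrightarrow> w = a \<or> (a, w) \<in> B" for w
    using assms(1,2) by (auto simp: htc_digraph_def mixed_graph_def)
  then show ?thesis using assms walk_map_R[OF assms(1), of A ws]
    by (cases ws) (auto simp: walk_Cons half_trek_def)
qed

lemma half_trek_of_path:
  assumes G: "mixed_graph m D B"
    and p: "stpath (htc_digraph m D B A) (L ` A) (R ` pa D v) p" "hd p = L a"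
  shows "\<exists>ws. p = L a # map R ws \<and> ws \<noteq> [] \<and> last ws \<in> pa D v \<and>
           half_trek D B a (last ws) (hd ws \<noteq> a, ws)"
proof -
  have walk: "walk (htc_digraph m D B A) p" "a \<in> A" "last p \<in> R ` pa D v"
    using p by (auto simp: stpath_def)
  obtain ws where ws: "p = L a # map R ws" using walk_from_L[OF walk(1) p(2)] by blast
  then have "ws \<noteq> []" "last ws \<in> pa D v" using walk(3) by (auto simp: last_map split: if_splits)
  then show ?thesis using ws walk walk_L_iff_half_trek[OF G walk(2)] by blast
qed

text \<open>Distinct sources give distinct left copies, and disjoint
  right sides give disjoint right copies.\<close>

lemma linking_of_HTC:
  assumes G: "mixed_graph m D B" and Y: "Y \<subseteq> A" "HTC D B v Y"
  shows "\<exists>Ps. linking (htc_digraph m D B A) (L ` A) (R ` pa D v) Ps \<and> card Ps = card (pa D v)"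
proof -
  obtain \<sigma> P where \<sigma>: "bij_betw \<sigma> Y (pa D v)"
    and ht: "\<forall>y\<in>Y. half_trek D B y (\<sigma> y) (P y)"
    and disj: "\<forall>y\<in>Y. \<forall>y'\<in>Y. y \<noteq> y' \<longrightarrow> right_side (P y) \<inter> right_side (P y') = {}"
    using Y(2) unfolding HTC_def htsystem_no_sided_int_def by blast
  define path where "path y = L y # map R (snd (P y))" for y
  have path: "stpath (htc_digraph m D B A) (L ` A) (R ` pa D v) (path y)" if "y \<in> Y" for y
  proof -
    obtain bid ws where P: "P y = (bid, ws)" by fastforce
    have "half_trek D B y (\<sigma> y) (bid, ws)" using ht that P by metis
    then have ws: "ws \<noteq> []" "last ws = \<sigma> y" "half_trek D B y (last ws) (hd ws \<noteq> y, ws)"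
      using half_trek_flag[OF G] by (auto simp: half_trek_def Let_def)
    then have "walk (htc_digraph m D B A) (path y)"
      using walk_L_iff_half_trek[OF G _ ws(1)] Y(1) that P by (auto simp: path_def)
    moreover have "\<sigma> y \<in> pa D v" using \<sigma> that by (auto simp: bij_betw_def)
    ultimately show ?thesis using ws Y(1) that P by (auto simp: stpath_def path_def last_map)
  qed
  have "set (path y) \<inter> set (path y') = {}" if "y \<in> Y" "y' \<in> Y" "y \<noteq> y'" for y y'
    using disj that by (auto simp: path_def right_side_def)
  then have "linking (htc_digraph m D B A) (L ` A) (R ` pa D v) (path ` Y)" "card (path ` Y) = card Y"
    using linking_of_family[of Y _ "L ` A" "R ` pa D v" path] path by blast+
  moreover have "card Y = card (pa D v)" using Y(2) by (simp add: HTC_def)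
  ultimately show ?thesis by auto
qed

text \<open>Conversely, |pa(v)| disjoint paths yield a set Y \<subseteq> A satisfying the half-trek
  criterion: Y collects the vertices a whose left copy starts a path, each path
  L a, R w_0, ..., R w_r is read back as the half-trek from a along w_0, ..., w_r, and
  the targets w_r exhaust pa(v) because the paths have distinct ends.\<close>

lemma HTC_of_linking:
  assumes G: "mixed_graph m D B" and A: "A \<subseteq> verts m - ({v} \<union> sib B v)"
    and Ps: "linking (htc_digraph m D B A) (L ` A) (R ` pa D v) Ps" "card Ps = card (pa D v)"
  shows "\<exists>Y. Y \<subseteq> A \<and> HTC D B v Y"
proof -
  let ?H = "htc_digraph m D B A"
  obtain path where path: "\<forall>z\<in>hd ` Ps. path z \<in> Ps \<and> hd (path z) = z"
    "\<forall>z\<in>hd ` Ps. \<forall>z'\<in>hd ` Ps. z \<noteq> z' \<longrightarrow> set (path z) \<inter> set (path z') = {}"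
    using linking_index_by_hd[OF Ps(1)] by blast
  define Y where "Y = {a \<in> A. L a \<in> hd ` Ps}"
  have hd_Ps: "hd ` Ps = L ` Y"
  proof
    show "hd ` Ps \<subseteq> L ` Y"
    proof
      fix z assume "z \<in> hd ` Ps"
      moreover then obtain a where "z = L a" "a \<in> A" using linking_path[OF Ps(1)] by blast
      ultimately show "z \<in> L ` Y" by (auto simp: Y_def)
    qed
  qed (auto simp: Y_def)
  have "card Y = card Ps"
    using card_image[OF linking_inj_hd[OF Ps(1)]] card_image[of L Y] hd_Ps by (simp add: inj_on_def)
  then have card_Y: "card Y = card (pa D v)" using Ps(2) by simp
  have finite_pa: "finite (pa D v)"
    using finite_subset[OF pa_verts[OF G]] by (simp add: verts_def)
  have "\<exists>us. path (L a) = L a # map R us \<and> us \<noteq> [] \<and> last us \<in> pa D v \<and>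
      half_trek D B a (last us) (hd us \<noteq> a, us)" if "a \<in> Y" for a
  proof -
    have "L a \<in> hd ` Ps" using hd_Ps that by blast
    then have "path (L a) \<in> Ps" "hd (path (L a)) = L a" using path(1) by blast+
    moreover from this(1) have "stpath ?H (L ` A) (R ` pa D v) (path (L a))"
      using linking_path[OF Ps(1)] by (simp add: stpath_def)
    ultimately show ?thesis using half_trek_of_path[OF G] by blast
  qed
  then obtain ws where ws: "\<forall>a\<in>Y. path (L a) = L a # map R (ws a) \<and> ws a \<noteq> [] \<and>
      last (ws a) \<in> pa D v \<and> half_trek D B a (last (ws a)) (hd (ws a) \<noteq> a, ws a)"
    by metis
  define \<sigma> where "\<sigma> a = last (ws a)" for a
  define P where "P a = (hd (ws a) \<noteq> a, ws a)" for a
  have disj: "right_side (P a) \<inter> right_side (P a') = {}" if "a \<in> Y" "a' \<in> Y" "a \<noteq> a'" for a a'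
  proof -
    have "L a \<in> hd ` Ps" "L a' \<in> hd ` Ps" "L a \<noteq> L a'" using hd_Ps that by auto
    then have "set (path (L a)) \<inter> set (path (L a')) = {}" using path(2) by blast
    then have "R ` set (ws a) \<inter> R ` set (ws a') = {}" using ws that by auto
    then show ?thesis by (auto simp: right_side_def P_def)
  qed
  have "inj_on \<sigma> Y"
  proof (rule inj_onI)
    fix a a' assume a: "a \<in> Y" "a' \<in> Y" "\<sigma> a = \<sigma> a'"
    then have "\<sigma> a \<in> right_side (P a) \<inter> right_side (P a')"
      using ws a(1,2) last_in_set
      by (metis IntI \<sigma>_def right_side_def P_def snd_conv)
    then show "a = a'" using disj a(1,2) by blast
  qed
  moreover have "\<sigma> ` Y \<subseteq> pa D v" using ws by (auto simp: \<sigma>_def)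
  ultimately have "\<sigma> ` Y = pa D v"
    using card_subset_eq[OF finite_pa] card_image card_Y by metis
  with \<open>inj_on \<sigma> Y\<close> have "bij_betw \<sigma> Y (pa D v)" by (simp add: bij_betw_def)
  have "htsystem_no_sided_int D B Y (pa D v)"
  proof -
    have "\<forall>a\<in>Y. half_trek D B a (\<sigma> a) (P a)" using ws by (simp add: \<sigma>_def P_def)
    then show ?thesis using \<open>bij_betw \<sigma> Y (pa D v)\<close> disj
      unfolding htsystem_no_sided_int_def left_side_def by blast
  qed
  moreover have "Y \<subseteq> A" by (auto simp: Y_def)
  moreover have "finite Y"
  proof -
    have "Y \<subseteq> verts m" using \<open>Y \<subseteq> A\<close> A by blast
    then show ?thesis by (rule finite_subset) (simp add: verts_def)
  qed
  moreover have "Y \<inter> ({v} \<union> sib B v) = {}" using \<open>Y \<subseteq> A\<close> A by blast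
  ultimately show ?thesis using card_Y by (auto simp: HTC_def)
qed

theorem mainTheorem8:
  assumes "mixed_graph m D B"
    and "v \<in> verts m"
    and "A \<subseteq> verts m - ({v} \<union> sib B v)"
  shows "(\<exists>Y. Y \<subseteq> A \<and> HTC D B v Y) \<longleftrightarrow>
         max_flow_size (gflow_nodes m A) (gflow_edges m D B v A) Src Snk gflow_cV gflow_cD
           (real (card (pa D v)))"
proof -
  let ?H = "htc_digraph m D B A"
  have "A \<subseteq> verts m" using assms(3) by blast
  then interpret gflow: unit_network "L ` A \<union> R ` verts m" ?H "L ` A" "R ` pa D v"
    Src Snk gflow_cV gflow_cD
    by (rule gflow_unit_network[OF assms(1)])
  have card_targets: "card (R ` pa D v) = card (pa D v)"
    by (simp add: card_image inj_on_def)
  have "(\<exists>Y. Y \<subseteq> A \<and> HTC D B v Y) \<longleftrightarrow>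
        (\<exists>Ps. linking ?H (L ` A) (R ` pa D v) Ps \<and> card Ps = card (pa D v))"
    using linking_of_HTC[OF assms(1)] HTC_of_linking[OF assms(1,3)] by blast
  also have "\<dots> \<longleftrightarrow> max_flow_size gflow.N gflow.E Src Snk gflow_cV gflow_cD (real (card (pa D v)))"
    using gflow.max_flow_iff_linking card_targets by simp
  finally show ?thesis
    unfolding gflow_nodes_net gflow_edges_net[OF pa_verts[OF assms(1)]] .
qed

end
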